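(* Let $r>c>\nu$ and $0<t<r-\nu$, set $R=(r-c)/(r-\nu)$, $\gamma=t/(r-\nu)$, fix $\rho\in[0,1)$, and for each integer $n\ge1$ let $L_n=\sqrt{n/(1+(n-1)\rho)}$ and let $Y_n$ be the unique real solution of $$R=\gamma\,\Phi(Y_n)+(1-\gamma)\,\Phi(L_nY_n),$$ with $\Phi$ the standard normal cdf. If $R>1/2$ (over-mean problem), then $Y_1>Y_2>\dots>Y_n>\dots>0$. If $R<1/2$ (under-mean problem), then $Y_1<Y_2<\dots<Y_n<\dots<0$.
   Context: $Y_n$ is the standardized optimal common order quantity $(X_n-\mu)/\sigma$ of a transshipment coalition of $n$ identical newsvendors (selling price $r$, cost $c$, salvage value $\nu$, unit transportation cost $t$) facing jointly normal demands with mean $\mu$, standard deviation $\sigma$ and common pairwise correlation $\rho$. The right-hand side of the defining equation is strictly increasing in $Y_n$ from $0$ to $1$, so $Y_n$ is well defined. *)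

theory Defs
  imports "HOL-Probability.Probability"
begin

definition Phi :: "real \<Rightarrow> real" where
  "Phi x = measure (density lborel std_normal_density) {..x}"

end

theory Submission imports Defs begin

text \<open>Write F_L(y) = mixed_Phi \<gamma> L y = \<gamma> \<Phi>(y) + (1 - \<gamma>) \<Phi>(L y), so that Y_n solves F_{L_n}(Y_n) = R.
  Each F_L is strictly increasing with F_L(0) = 1/2, so Y_n has the sign of R - 1/2.
  The pooling factor L_n = pooling_factor \<rho> n increases strictly with n, and for y > 0 a larger factor raises F_L(y);
  hence F_{L_{n+1}}(Y_n) > F_{L_n}(Y_n) = R = F_{L_{n+1}}(Y_{n+1}), i.e. Y_{n+1} < Y_n.
  For y < 0 all these inequalities reverse.\<close>

abbreviation std_normal_distr :: "real measure" where
  "std_normal_distr \<equiv> density lborel (\<lambda>x. ennreal (std_normal_density x))"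

lemma prob_space_std_normal_distr: "prob_space std_normal_distr"
  using prob_space_normal_density by simp

lemma emeasure_std_normal_distr:
  "A \<in> sets borel \<Longrightarrow>
    emeasure std_normal_distr A = (\<integral>\<^sup>+ x. ennreal (std_normal_density x) * indicator A x \<partial>lborel)"
  by (subst emeasure_density) auto

lemma measure_std_normal_distr_Ioc_pos:
  assumes "x < y"
  shows "0 < measure std_normal_distr {x<..y}"
proof -
  define c where "c = std_normal_density (\<bar>x\<bar> + \<bar>y\<bar>)"
  have "c > 0" unfolding c_def by (simp add: normal_density_pos)
  have lower_bound: "ennreal c * indicator {x<..y} z
      \<le> ennreal (std_normal_density z) * indicator {x<..y} z" for z
  proof (cases "z \<in> {x<..y}")
    case True
    then have "z\<^sup>2 \<le> (\<bar>x\<bar> + \<bar>y\<bar>)\<^sup>2"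
      by (intro abs_le_square_iff[THEN iffD1]) auto
    then have "c \<le> std_normal_density z"
      unfolding c_def std_normal_density_def by (intro mult_left_mono) auto
    then show ?thesis using True by (simp add: ennreal_leI)
  qed auto
  have "ennreal c * ennreal (y - x) = (\<integral>\<^sup>+ z. ennreal c * indicator {x<..y} z \<partial>lborel)"
    using assms by (simp add: nn_integral_cmult_indicator)
  also have "\<dots> \<le> emeasure std_normal_distr {x<..y}"
    by (subst emeasure_std_normal_distr) (auto intro!: nn_integral_mono lower_bound)
  finally have "0 < emeasure std_normal_distr {x<..y}"
    using \<open>c > 0\<close> assms
    by (metis ennreal_zero_less_mult_iff ennreal_less_zero_iff diff_gt_0_iff_gt order_less_le_trans)
  then show ?thesis
    using prob_space.finite_measure[OF prob_space_std_normal_distr]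
    by (simp add: finite_measure.emeasure_eq_measure)
qed

lemma strict_mono_Phi: "strict_mono Phi"
proof
  fix x y :: real
  assume "x < y"
  interpret prob_space std_normal_distr by (rule prob_space_std_normal_distr)
  have "{..y} = {..x} \<union> {x<..y}" using \<open>x < y\<close> by auto
  moreover have "measure std_normal_distr ({..x} \<union> {x<..y})
      = measure std_normal_distr {..x} + measure std_normal_distr {x<..y}"
    by (rule finite_measure_Union) auto
  ultimately have "measure std_normal_distr {..y}
      = measure std_normal_distr {..x} + measure std_normal_distr {x<..y}"
    by simp
  then show "Phi x < Phi y"
    unfolding Phi_def using measure_std_normal_distr_Ioc_pos[OF \<open>x < y\<close>] by simp
qed

lemma emeasure_std_normal_distr_atMost_0:
  "emeasure std_normal_distr {..0} = emeasure std_normal_distr {0..}"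
proof -
  have "emeasure std_normal_distr {..0}
      = (\<integral>\<^sup>+ x. ennreal (std_normal_density x) * indicator {..0} x \<partial>lborel)"
    by (rule emeasure_std_normal_distr) auto
  also have "\<dots> = ennreal \<bar>-1\<bar> * (\<integral>\<^sup>+ x. ennreal (std_normal_density (0 + -1 * x))
      * indicator {..0} (0 + -1 * x) \<partial>lborel)"
    by (rule nn_integral_real_affine) auto
  also have "\<dots> = (\<integral>\<^sup>+ x. ennreal (std_normal_density x) * indicator {0..} x \<partial>lborel)"
    by (auto intro!: nn_integral_cong simp: std_normal_density_def split: split_indicator)
  also have "\<dots> = emeasure std_normal_distr {0..}"
    by (rule emeasure_std_normal_distr[symmetric]) auto
  finally show ?thesis .
qed

lemma Phi_0: "Phi 0 = 1/2"
proof -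
  interpret prob_space std_normal_distr by (rule prob_space_std_normal_distr)
  have "emeasure std_normal_distr {0} = ennreal (std_normal_density 0) * emeasure lborel {0::real}"
    by (subst emeasure_std_normal_distr)
       (auto intro!: nn_integral_cong simp: nn_integral_cmult_indicator split: split_indicator)
  then have "measure std_normal_distr {0} = 0" by (simp add: measure_def)
  moreover have "measure std_normal_distr ({0} \<union> {0<..})
      = measure std_normal_distr {0} + measure std_normal_distr {0<..}"
    and "measure std_normal_distr ({..0} \<union> {0<..})
      = measure std_normal_distr {..0} + measure std_normal_distr {0<..}"
    by (rule finite_measure_Union; auto)+
  moreover have "{0::real..} = {0} \<union> {0<..}" and "{..0} \<union> {0<..} = (UNIV :: real set)" by auto
  ultimately have "measure std_normal_distr {0..} = measure std_normal_distr {0<..}"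
    and "1 = measure std_normal_distr {..0} + measure std_normal_distr {0<..}"
    using prob_space by simp_all
  moreover have "measure std_normal_distr {..0} = measure std_normal_distr {0..}"
    using emeasure_std_normal_distr_atMost_0 by (simp add: measure_def)
  ultimately show ?thesis unfolding Phi_def by simp
qed

definition mixed_Phi :: "real \<Rightarrow> real \<Rightarrow> real \<Rightarrow> real" where
  "mixed_Phi \<gamma> L y = \<gamma> * Phi y + (1 - \<gamma>) * Phi (L * y)"

lemma mixed_Phi_0: "mixed_Phi \<gamma> L 0 = 1/2"
  by (simp add: mixed_Phi_def Phi_0 field_simps)

lemma strict_mono_mixed_Phi:
  assumes "0 < \<gamma>" "\<gamma> \<le> 1" "0 \<le> L"
  shows "strict_mono (mixed_Phi \<gamma> L)"
proof
  fix y y' :: real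
  assume "y < y'"
  then have "Phi y < Phi y'" and "Phi (L * y) \<le> Phi (L * y')"
    using assms strict_mono_Phi by (auto simp: strict_mono_less strict_mono_less_eq mult_left_mono)
  then show "mixed_Phi \<gamma> L y < mixed_Phi \<gamma> L y'"
    unfolding mixed_Phi_def using assms by (intro add_less_le_mono mult_left_mono) auto
qed

lemma mixed_Phi_less_factor_pos:
  assumes "\<gamma> < 1" "L < L'" "0 < y"
  shows "mixed_Phi \<gamma> L y < mixed_Phi \<gamma> L' y"
  unfolding mixed_Phi_def using assms strict_mono_Phi by (simp add: strict_mono_less)

lemma mixed_Phi_less_factor_neg:
  assumes "\<gamma> < 1" "L < L'" "y < 0"
  shows "mixed_Phi \<gamma> L' y < mixed_Phi \<gamma> L y"
  unfolding mixed_Phi_def using assms strict_mono_Phi by (simp add: strict_mono_less)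

lemma mixed_Phi_roots_over_half:
  assumes "0 < \<gamma>" "\<gamma> < 1" "0 \<le> L" "L < L'"
    and "mixed_Phi \<gamma> L y = R" "mixed_Phi \<gamma> L' y' = R" "1/2 < R"
  shows "y' < y \<and> 0 < y"
proof
  have mono: "strict_mono (mixed_Phi \<gamma> L)" "strict_mono (mixed_Phi \<gamma> L')"
    using assms by (simp_all add: strict_mono_mixed_Phi)
  show "0 < y"
    using assms strict_mono_less[OF mono(1), of 0 y] by (simp add: mixed_Phi_0)
  then have "mixed_Phi \<gamma> L' y' < mixed_Phi \<gamma> L' y"
    using assms mixed_Phi_less_factor_pos by metis
  then show "y' < y" using strict_mono_less[OF mono(2)] by blast
qed

lemma mixed_Phi_roots_under_half:
  assumes "0 < \<gamma>" "\<gamma> < 1" "0 \<le> L" "L < L'"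
    and "mixed_Phi \<gamma> L y = R" "mixed_Phi \<gamma> L' y' = R" "R < 1/2"
  shows "y < y' \<and> y < 0"
proof
  have mono: "strict_mono (mixed_Phi \<gamma> L)" "strict_mono (mixed_Phi \<gamma> L')"
    using assms by (simp_all add: strict_mono_mixed_Phi)
  show "y < 0"
    using assms strict_mono_less[OF mono(1), of y 0] by (simp add: mixed_Phi_0)
  then have "mixed_Phi \<gamma> L' y < mixed_Phi \<gamma> L' y'"
    using assms mixed_Phi_less_factor_neg by metis
  then show "y < y'" using strict_mono_less[OF mono(2)] by blast
qed

definition pooling_factor :: "real \<Rightarrow> nat \<Rightarrow> real" where
  "pooling_factor \<rho> n = sqrt (real n / (1 + (real n - 1) * \<rho>))"

lemma strict_mono_pooling_factor:
  assumes "0 \<le> \<rho>" "\<rho> < 1"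
  shows "strict_mono (pooling_factor \<rho>)"
proof (rule strict_mono_Suc_iff[THEN iffD2], intro allI)
  fix n :: nat
  have "1 + (real n - 1) * \<rho> > 0"
    using assms by (cases n) (auto simp: add_pos_nonneg)
  moreover have "1 + real n * \<rho> > 0"
    using assms by (simp add: add_pos_nonneg)
  moreover have "real n * (1 + real n * \<rho>) < (real n + 1) * (1 + (real n - 1) * \<rho>)"
    using assms by (simp add: algebra_simps)
  ultimately have "real n / (1 + (real n - 1) * \<rho>) < (real n + 1) / (1 + real n * \<rho>)"
    by (simp add: divide_simps)
  then show "pooling_factor \<rho> n < pooling_factor \<rho> (Suc n)"
    unfolding pooling_factor_def by (simp add: add.commute)
qed

lemma pooling_factor_nonneg:
  assumes "0 \<le> \<rho>" "\<rho> < 1"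
  shows "0 \<le> pooling_factor \<rho> n"
  using strict_mono_less_eq[OF strict_mono_pooling_factor[OF assms], of 0 n]
  by (simp add: pooling_factor_def)

theorem theorem3:
  fixes r c \<nu> t \<rho> :: real and Y :: "nat \<Rightarrow> real"
  assumes "r > c" and "c > \<nu>" and "0 < t" and "t < r - \<nu>"
    and "0 \<le> \<rho>" and "\<rho> < 1"
    and Y_eq: "\<forall>n\<ge>1. (r - c) / (r - \<nu>) =
        (t / (r - \<nu>)) * Phi (Y n)
        + (1 - t / (r - \<nu>)) * Phi (sqrt (real n / (1 + (real n - 1) * \<rho>)) * Y n)"
  shows "((r - c) / (r - \<nu>) > 1/2 \<longrightarrow> (\<forall>n\<ge>1. Y (Suc n) < Y n \<and> 0 < Y n))
       \<and> ((r - c) / (r - \<nu>) < 1/2 \<longrightarrow> (\<forall>n\<ge>1. Y n < Y (Suc n) \<and> Y n < 0))"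
proof -
  define R where "R = (r - c) / (r - \<nu>)"
  define \<gamma> where "\<gamma> = t / (r - \<nu>)"
  have "0 < \<gamma>" "\<gamma> < 1"
    using assms unfolding \<gamma>_def by (auto simp: divide_simps)
  have root: "mixed_Phi \<gamma> (pooling_factor \<rho> n) (Y n) = R" if "n \<ge> 1" for n
    using Y_eq that unfolding R_def \<gamma>_def mixed_Phi_def pooling_factor_def by auto
  have factor: "0 \<le> pooling_factor \<rho> n" "pooling_factor \<rho> n < pooling_factor \<rho> (Suc n)" for n
    using assms pooling_factor_nonneg strict_mono_pooling_factor by (auto simp: strict_mono_Suc_iff)
  show ?thesis
    unfolding R_def[symmetric]
    using mixed_Phi_roots_over_half[OF \<open>0 < \<gamma>\<close> \<open>\<gamma> < 1\<close> factor root root]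
      mixed_Phi_roots_under_half[OF \<open>0 < \<gamma>\<close> \<open>\<gamma> < 1\<close> factor root root]
    by simp
qed

end
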